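(* Let $\mathcal{H}$ be a finite-dimensional Hilbert space and let $\mathscr{N}:\mathcal{H}\to(-\infty,\infty]$ be feasible. Then $\mathscr{N}^{**}$ is feasible.
   Context: $\mathcal{H}$ is regarded as a real inner product space (if complex, with inner product $\mathrm{Re}\langle\cdot,\cdot\rangle$). A functional $\mathscr{N}:\mathcal{H}\to(-\infty,\infty]$ is proper if it is not identically $\infty$. It is called feasible if it is lower semi-continuous, proper, bounded below, and satisfies $\lim_{\|x\|\to\infty}\mathscr{N}(x)/\|x\|=\infty$. The Fenchel conjugate is $\mathscr{N}^*(y)=\sup_x \langle x,y\rangle-\mathscr{N}(x)$, and $\mathscr{N}^{**}=(\mathscr{N}^* )^*$ (the lower semi-continuous convex envelope of $\mathscr{N}$). *)

theory Defs
  imports "HOL-Analysis.Analysis"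
begin

definition lsc_fun :: "('a::topological_space \<Rightarrow> ereal) \<Rightarrow> bool" where
  "lsc_fun N \<longleftrightarrow> (\<forall>x. N x \<le> Liminf (at x) N)"

definition proper_fun :: "('a \<Rightarrow> ereal) \<Rightarrow> bool" where
  "proper_fun N \<longleftrightarrow> (\<forall>x. N x \<noteq> -\<infinity>) \<and> (\<exists>x. N x \<noteq> \<infinity>)"

definition bdd_below_fun :: "('a \<Rightarrow> ereal) \<Rightarrow> bool" where
  "bdd_below_fun N \<longleftrightarrow> (\<exists>c::real. \<forall>x. ereal c \<le> N x)"

definition supercoercive :: "('a::real_normed_vector \<Rightarrow> ereal) \<Rightarrow> bool" where
  "supercoercive N \<longleftrightarrow> ((\<lambda>x. N x / ereal (norm x)) \<longlongrightarrow> \<infinity>) at_infinity"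

definition feasible :: "('a::real_normed_vector \<Rightarrow> ereal) \<Rightarrow> bool" where
  "feasible N \<longleftrightarrow> lsc_fun N \<and> proper_fun N \<and> bdd_below_fun N \<and> supercoercive N"

definition fenchel_conj :: "('a::real_inner \<Rightarrow> ereal) \<Rightarrow> 'a \<Rightarrow> ereal" where
  "fenchel_conj N y = (SUP x. ereal (inner x y) - N x)"

end

theory Submission
  imports Defs
begin

text \<open>A Fenchel conjugate is lower semicontinuous as a supremum of affine functions, and
  the biconjugate lies below the function, which gives properness. Growth and local boundedness
  are dual: a supercoercive function bounded below has a conjugate bounded above on every ball,
  and a function bounded above on every ball has a supercoercive conjugate (test \<open>z\<close> against
  \<open>y = M z / \<parallel>z\<parallel>\<close>). Finally \<open>N\<^sup>*\<^sup>* \<ge> -N\<^sup>*(0) \<ge> inf N\<close>.\<close>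

lemma fenchel_young:
  fixes N :: "'a::real_inner \<Rightarrow> ereal"
  shows "ereal (inner x y) - N x \<le> fenchel_conj N y"
  unfolding fenchel_conj_def by (rule SUP_upper) simp

lemma lsc_fenchel_conj:
  fixes N :: "'a::real_inner \<Rightarrow> ereal"
  shows "lsc_fun (fenchel_conj N)"
  unfolding lsc_fun_def
proof
  fix x
  show "fenchel_conj N x \<le> Liminf (at x) (fenchel_conj N)"
    unfolding le_Liminf_iff
  proof (intro allI impI)
    fix a assume "a < fenchel_conj N x"
    then obtain y where ay: "a < ereal (inner y x) - N y"
      unfolding fenchel_conj_def by (auto simp: less_SUP_iff)
    have "eventually (\<lambda>z. a < ereal (inner y z) - N y) (at x)"
    proof (cases "N y")
      case (real n)
      have "((\<lambda>z. ereal (inner y z - n)) \<longlongrightarrow> ereal (inner y x - n)) (at x)"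
        by (intro tendsto_intros)
      from order_tendstoD(1)[OF this, of a] show ?thesis
        using ay real by simp
    qed (use ay in auto)
    then show "eventually (\<lambda>z. a < fenchel_conj N z) (at x)"
      by eventually_elim (blast intro: less_le_trans fenchel_young)
  qed
qed

lemma fenchel_biconj_le:
  fixes N :: "'a::real_inner \<Rightarrow> ereal"
  shows "fenchel_conj (fenchel_conj N) z \<le> N z"
  unfolding fenchel_conj_def[of "fenchel_conj N"]
proof (rule SUP_least)
  fix y
  have young: "ereal (inner z y) - N z \<le> fenchel_conj N y"
    by (rule fenchel_young)
  show "ereal (inner y z) - fenchel_conj N y \<le> N z"
  proof (cases "N z")
    case (real n)
    then show ?thesis
      using young by (cases "fenchel_conj N y") (simp_all add: inner_commute)
  next
    case MInf
    then show ?thesis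
      using young by simp
  qed simp
qed

lemma fenchel_conj_zero_le:
  fixes N :: "'a::real_inner \<Rightarrow> ereal"
  assumes "\<And>x. ereal c \<le> N x"
  shows "fenchel_conj N 0 \<le> ereal (- c)"
  unfolding fenchel_conj_def
proof (rule SUP_least)
  fix x
  show "ereal (inner x 0) - N x \<le> ereal (- c)"
    using assms[of x] by (cases "N x") auto
qed

lemma fenchel_biconj_ge:
  fixes N :: "'a::real_inner \<Rightarrow> ereal"
  assumes "\<And>x. ereal c \<le> N x"
  shows "ereal c \<le> fenchel_conj (fenchel_conj N) z"
proof -
  have "fenchel_conj N 0 \<le> ereal (- c)"
    using assms by (rule fenchel_conj_zero_le)
  then have "ereal c \<le> - fenchel_conj N 0"
    by (cases "fenchel_conj N 0") auto
  also have "\<dots> = ereal (inner 0 z) - fenchel_conj N 0"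
    by (cases "fenchel_conj N 0") auto
  also have "\<dots> \<le> fenchel_conj (fenchel_conj N) z"
    by (rule fenchel_young)
  finally show ?thesis .
qed

lemma fenchel_conj_bounded_on_balls:
  fixes N :: "'a::real_inner \<Rightarrow> ereal"
  assumes sc: "supercoercive N" and c: "\<And>x. ereal c \<le> N x"
  shows "\<exists>K. \<forall>y. norm y \<le> M \<longrightarrow> fenchel_conj N y \<le> ereal K"
proof -
  define M' where "M' = max 0 M"
  have "eventually (\<lambda>x. ereal (M' + 1) < N x / ereal (norm x)) at_infinity"
    using sc unfolding supercoercive_def tendsto_PInfty by blast
  then obtain b where b: "\<And>x. b \<le> norm x \<Longrightarrow> ereal (M' + 1) < N x / ereal (norm x)"
    unfolding eventually_at_infinity by blast
  define R where "R = max b 1"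
  define K where "K = max 0 (R * M' - c)"
  have "fenchel_conj N y \<le> ereal K" if y: "norm y \<le> M" for y
    unfolding fenchel_conj_def
  proof (rule SUP_least)
    fix x
    have "norm y \<le> M'"
      using y unfolding M'_def by simp
    then have inn: "inner x y \<le> norm x * M'"
      using norm_cauchy_schwarz[of x y] mult_left_mono[of "norm y" M' "norm x"] by simp
    show "ereal (inner x y) - N x \<le> ereal K"
    proof (cases "N x")
      case (real n)
      show ?thesis
      proof (cases "R \<le> norm x")
        case True
        then have "b \<le> norm x" "norm x > 0" unfolding R_def by auto
        then have "(M' + 1) * norm x < n"
          using b[of x] real by (simp add: field_simps)
        moreover have "(M' + 1) * norm x = norm x * M' + norm x"
          by (simp add: algebra_simps)
        ultimately have "inner x y - n \<le> 0"
          using inn norm_ge_zero[of x] by linarith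
        then have "inner x y - n \<le> K"
          unfolding K_def by simp
        then show ?thesis using real by simp
      next
        case False
        have "norm x * M' \<le> R * M'"
          using False unfolding M'_def by (intro mult_right_mono) auto
        then have "inner x y - n \<le> K"
          using inn c[of x] real unfolding K_def by simp
        then show ?thesis using real by simp
      qed
    qed (use c[of x] in auto)
  qed
  then show ?thesis by blast
qed

lemma supercoercive_fenchel_conj:
  fixes G :: "'a::real_inner \<Rightarrow> ereal"
  assumes bounded: "\<And>M. \<exists>K. \<forall>y. norm y \<le> M \<longrightarrow> G y \<le> ereal K"
  shows "supercoercive (fenchel_conj G)"
  unfolding supercoercive_def tendsto_PInfty eventually_at_infinity
proof
  fix r :: real
  define M where "M = max 0 (r + 1)"
  obtain K where K: "\<And>y. norm y \<le> M \<Longrightarrow> G y \<le> ereal K"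
    using bounded by blast
  show "\<exists>b. \<forall>z. b \<le> norm z \<longrightarrow> ereal r < fenchel_conj G z / ereal (norm z)"
  proof (intro exI allI impI)
    fix z :: 'a assume zb: "max 0 K + 1 \<le> norm z"
    then have zp: "norm z > 0" by linarith
    define y where "y = (M / norm z) *\<^sub>R z"
    have "norm y = M" using zp unfolding y_def M_def by simp
    then have "G y \<le> ereal K" using K by simp
    moreover have "inner y z = M * norm z" using zp unfolding y_def
      by (simp add: power2_norm_eq_inner[symmetric] power2_eq_square)
    ultimately have "ereal (M * norm z - K) \<le> ereal (inner y z) - G y"
      by (cases "G y") auto
    also have "\<dots> \<le> fenchel_conj G z"
      by (rule fenchel_young)
    finally have low: "ereal (M * norm z - K) \<le> fenchel_conj G z" .
    have "r * norm z < M * norm z - K"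
      using zb zp mult_right_mono[of "r + 1" M "norm z"] unfolding M_def
      by (simp add: distrib_right)
    then have "ereal r < ereal (M * norm z - K) / ereal (norm z)"
      using zp by (simp add: field_simps)
    also have "\<dots> \<le> fenchel_conj G z / ereal (norm z)"
      using zp by (intro ereal_divide_right_mono[OF low]) simp
    finally show "ereal r < fenchel_conj G z / ereal (norm z)" .
  qed
qed

theorem proposition2:
  fixes N :: "'a::euclidean_space \<Rightarrow> ereal"
  assumes "feasible N"
  shows "feasible (fenchel_conj (fenchel_conj N))"
proof -
  from assms have sc: "supercoercive N" and pr: "proper_fun N" and "bdd_below_fun N"
    unfolding feasible_def by auto
  then obtain c where c: "\<And>x. ereal c \<le> N x"
    unfolding bdd_below_fun_def by auto
  obtain x0 where "N x0 \<noteq> \<infinity>"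
    using pr unfolding proper_fun_def by auto
  then have "fenchel_conj (fenchel_conj N) x0 \<noteq> \<infinity>"
    using fenchel_biconj_le[of N x0] by auto
  moreover have "\<And>z. fenchel_conj (fenchel_conj N) z \<noteq> -\<infinity>"
    using fenchel_biconj_ge[of c N, OF c] by (metis MInfty_neq_ereal(1) ereal_infty_less_eq(2))
  ultimately have "proper_fun (fenchel_conj (fenchel_conj N))"
    unfolding proper_fun_def by blast
  moreover have "supercoercive (fenchel_conj (fenchel_conj N))"
    using fenchel_conj_bounded_on_balls[of N c, OF sc c] by (rule supercoercive_fenchel_conj)
  ultimately show ?thesis
    unfolding feasible_def bdd_below_fun_def
    using lsc_fenchel_conj fenchel_biconj_ge[of c N, OF c] by blast
qed

end
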